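(* Let $n \geq 18$ be divisible by $3$, and let $A_n$ be the set of binary words of length $n$ that contain no $3$-antipower as a factor. Then $$A_n = \mathcal{C}_n\left(0^* \cup (01)^* \cup (01)^* 0 \cup 0^*10^* \cup 0^*011 \cup 0^*101\right).$$
   Context: Words are over $\{0,1\}$. A $3$-antipower is a word $u_1u_2u_3$ with $|u_1|=|u_2|=|u_3|$ and $u_1,u_2,u_3$ pairwise distinct; a factor is a contiguous subword. For a word $w$, $w^* = \{\varepsilon, w, w^2, \dots\}$, and sets of words are written as regular expressions (concatenation of sets, union). For a language $L \subseteq \{0,1\}^*$, $\mathcal{C}_n(L)$ denotes the closure of $L \cap \{0,1\}^n$ under bitwise complementation (exchanging $0$ and $1$) and reversal; i.e., it consists of all length-$n$ words of $L$, their bitwise complements, their reversals, and the bitwise complements of their reversals. *)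

theory Defs
  imports Main "HOL-Library.Sublist"
begin

(* Binary words: bool list, with False = letter 0 and True = letter 1. *)
type_synonym word = "bool list"

abbreviation b0 :: bool where "b0 \<equiv> False"
abbreviation b1 :: bool where "b1 \<equiv> True"

definition three_antipower :: "word \<Rightarrow> bool" where
  "three_antipower w \<longleftrightarrow> (\<exists>u1 u2 u3. w = u1 @ u2 @ u3 \<and>
      length u1 = length u2 \<and> length u2 = length u3 \<and>
      u1 \<noteq> u2 \<and> u1 \<noteq> u3 \<and> u2 \<noteq> u3)"

definition star_of :: "word \<Rightarrow> word set" where
  "star_of w = {concat (replicate k w) | k. True}"

definition lconc :: "word set \<Rightarrow> word set \<Rightarrow> word set" (infixr "\<cdot>" 65) where
  "A \<cdot> B = {u @ v | u v. u \<in> A \<and> v \<in> B}"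

definition complement :: "word \<Rightarrow> word" where
  "complement w = map Not w"

definition closure_n :: "nat \<Rightarrow> word set \<Rightarrow> word set" where
  "closure_n n L = (let Ln = {w \<in> L. length w = n} in
      Ln \<union> complement ` Ln \<union> rev ` Ln \<union> (complement \<circ> rev) ` Ln)"

definition A :: "nat \<Rightarrow> word set" where
  "A n = {w. length w = n \<and> \<not> (\<exists>f. sublist f w \<and> three_antipower f)}"

definition L4 :: "word set" where
  "L4 = star_of [b0] \<union> star_of [b0,b1] \<union> (star_of [b0,b1] \<cdot> {[b0]})
      \<union> (star_of [b0] \<cdot> {[b1]} \<cdot> star_of [b0])
      \<union> (star_of [b0] \<cdot> {[b0,b1,b1]}) \<union> (star_of [b0] \<cdot> {[b1,b0,b1]})"

end

theory Submission
  imports Defs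
begin

text \<open>
  Antipower-freeness is inherited by factors and invariant under complement and reversal.
  For \<open>m \<ge> 12\<close> every antipower-free word of length \<open>m\<close> is, up to complement, one of a few
  explicit shapes. This is proved by induction on \<open>m\<close>: the case \<open>m = 12\<close> is settled by
  enumerating all antipower-free words of that length, and appending a letter to a shape either
  gives a shape again or creates a 3-antipower whose window can be written down explicitly.
  When 3 divides \<open>m\<close>, the shapes are words of \<open>L4\<close> or their reversals, and the words of
  \<open>L4\<close> are antipower-free by direct inspection.
\<close>

section \<open>Antipower-free words\<close>

definition antipower_free :: "word \<Rightarrow> bool" where
  "antipower_free w \<longleftrightarrow> \<not> (\<exists>f. sublist f w \<and> three_antipower f)"

lemma A_eq_antipower_free: "A n = {w. length w = n \<and> antipower_free w}"
  unfolding A_def antipower_free_def by simp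

lemma antipower_free_appendD: "antipower_free (x @ y) \<Longrightarrow> antipower_free x"
  unfolding antipower_free_def by (meson sublist_append_rightI sublist_order.order.trans)

lemma three_antipower_rev: "three_antipower f \<Longrightarrow> three_antipower (rev f)"
proof -
  assume "three_antipower f"
  then obtain u1 u2 u3 where "f = u1 @ u2 @ u3" "length u1 = length u2" "length u2 = length u3"
    "u1 \<noteq> u2" "u1 \<noteq> u3" "u2 \<noteq> u3"
    unfolding three_antipower_def by blast
  then show ?thesis
    unfolding three_antipower_def by (intro exI[of _ "rev u3"] exI[of _ "rev u2"] exI[of _ "rev u1"]) auto
qed

lemma three_antipower_map_Not: "three_antipower f \<Longrightarrow> three_antipower (map Not f)"
proof -
  assume "three_antipower f"
  then obtain u1 u2 u3 where "f = u1 @ u2 @ u3" "length u1 = length u2" "length u2 = length u3"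
    "u1 \<noteq> u2" "u1 \<noteq> u3" "u2 \<noteq> u3"
    unfolding three_antipower_def by blast
  moreover have "inj Not" by (auto intro: injI)
  ultimately show ?thesis
    unfolding three_antipower_def
    by (intro exI[of _ "map Not u1"] exI[of _ "map Not u2"] exI[of _ "map Not u3"]) auto
qed

lemma Not_comp_Not [simp]: "Not \<circ> Not = id"
  by auto

lemma antipower_free_rev_iff [simp]: "antipower_free (rev w) \<longleftrightarrow> antipower_free w"
proof -
  have *: "antipower_free w \<Longrightarrow> antipower_free (rev w)" for w
    unfolding antipower_free_def using sublist_rev_right three_antipower_rev by blast
  show ?thesis using *[of "rev w"] *[of w] by auto
qed

lemma antipower_free_map_Not_iff [simp]: "antipower_free (map Not w) \<longleftrightarrow> antipower_free w"
proof -
  have *: "antipower_free (map Not w)" if "antipower_free w" for w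
  proof -
    have "\<not> (sublist f (map Not w) \<and> three_antipower f)" for f
    proof
      assume "sublist f (map Not w) \<and> three_antipower f"
      then have "sublist (map Not f) w" "three_antipower (map Not f)"
        using map_mono_sublist[of f "map Not w" Not] three_antipower_map_Not by auto
      then show False using that unfolding antipower_free_def by blast
    qed
    then show ?thesis unfolding antipower_free_def by blast
  qed
  show ?thesis using *[of "map Not w"] *[of w] by auto
qed

definition antipower_at :: "word \<Rightarrow> nat \<Rightarrow> nat \<Rightarrow> bool" where
  "antipower_at w s k \<longleftrightarrow> s + 3*k \<le> length w \<and>
     (\<exists>i<k. w!(s+i) \<noteq> w!(s+k+i)) \<and> (\<exists>i<k. w!(s+i) \<noteq> w!(s+2*k+i)) \<and>
     (\<exists>i<k. w!(s+k+i) \<noteq> w!(s+2*k+i))"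

lemma antipower_at_append3:
  assumes "length u1 = k" "length u2 = k" "length u3 = k"
  shows "antipower_at (p @ u1 @ u2 @ u3 @ q) (length p) k \<longleftrightarrow> u1 \<noteq> u2 \<and> u1 \<noteq> u3 \<and> u2 \<noteq> u3"
proof -
  let ?w = "p @ u1 @ u2 @ u3 @ q"
  have nth: "?w!(length p+i) = u1!i" "?w!(length p+k+i) = u2!i" "?w!(length p+2*k+i) = u3!i"
    if "i < k" for i
    using that assms by (auto simp: nth_append)
  have neq: "u \<noteq> v \<longleftrightarrow> (\<exists>i<k. u!i \<noteq> v!i)" if "length u = k" "length v = k" for u v
    using that by (auto simp: list_eq_iff_nth_eq)
  show ?thesis
    unfolding antipower_at_def neq[OF assms(1,2)] neq[OF assms(1,3)] neq[OF assms(2,3)]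
    using assms by (simp del: nth_append_length_plus add: nth cong: conj_cong)
qed

lemma antipower_free_iff_antipower_at: "antipower_free w \<longleftrightarrow> \<not> (\<exists>s k. antipower_at w s k)"
proof -
  have "(\<exists>f. sublist f w \<and> three_antipower f) \<longleftrightarrow> (\<exists>s k. antipower_at w s k)"
  proof
    assume "\<exists>f. sublist f w \<and> three_antipower f"
    then obtain p q u1 u2 u3 where "w = p @ (u1 @ u2 @ u3) @ q"
      "length u1 = length u2" "length u2 = length u3" "u1 \<noteq> u2" "u1 \<noteq> u3" "u2 \<noteq> u3"
      unfolding sublist_def three_antipower_def by blast
    then have "antipower_at w (length p) (length u1)"
      using antipower_at_append3 by simp
    then show "\<exists>s k. antipower_at w s k" by blast
  next
    assume "\<exists>s k. antipower_at w s k"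
    then obtain s k where a: "antipower_at w s k" by blast
    then have le: "s + 3*k \<le> length w" by (simp add: antipower_at_def)
    define u1 where "u1 = take k (drop s w)"
    define u2 where "u2 = take k (drop (s+k) w)"
    define u3 where "u3 = take k (drop (s+k+k) w)"
    have split: "take k (drop t w) @ drop (t + k) w = drop t w" for t
      by (metis append_take_drop_id drop_drop add.commute)
    have w: "w = take s w @ u1 @ u2 @ u3 @ drop (s+k+k+k) w"
      unfolding u1_def u2_def u3_def split by simp
    have len: "length u1 = k" "length u2 = k" "length u3 = k" "length (take s w) = s"
      using le by (simp_all add: u1_def u2_def u3_def)
    have "antipower_at (take s w @ u1 @ u2 @ u3 @ drop (s+k+k+k) w) (length (take s w)) k"
      using a by (simp only: len flip: w)
    then have "u1 \<noteq> u2" "u1 \<noteq> u3" "u2 \<noteq> u3"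
      unfolding antipower_at_append3[OF len(1-3)] by simp_all
    then have "three_antipower (u1 @ u2 @ u3)"
      unfolding three_antipower_def using len
      by (intro exI[of _ u1] exI[of _ u2] exI[of _ u3]) simp
    moreover have "sublist (u1 @ u2 @ u3) w"
      by (subst w) (metis sublist_appendI append.assoc)
    ultimately show "\<exists>f. sublist f w \<and> three_antipower f" by blast
  qed
  then show ?thesis unfolding antipower_free_def by simp
qed

section \<open>Shapes of antipower-free words\<close>

definition word_of :: "nat \<Rightarrow> (nat \<Rightarrow> bool) \<Rightarrow> word" where
  "word_of m P = map P [0..<m]"

lemma length_word_of [simp]: "length (word_of m P) = m"
  by (simp add: word_of_def)

lemma nth_word_of [simp]: "i < m \<Longrightarrow> word_of m P ! i = P i"
  by (simp add: word_of_def)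

lemma word_of_cong: "(\<And>i. i < m \<Longrightarrow> P i = Q i) \<Longrightarrow> word_of m P = word_of m Q"
  by (simp add: word_of_def)

lemma word_of_snoc: "word_of m P @ [c] = word_of (Suc m) (\<lambda>i. if i < m then P i else c)"
  by (simp add: word_of_def)

lemma antipower_free_word_of_iff:
  "antipower_free (word_of N P) \<longleftrightarrow> \<not> (\<exists>s k. s + 3*k \<le> N \<and>
     (\<exists>i<k. P (s+i) \<noteq> P (s+k+i)) \<and> (\<exists>i<k. P (s+i) \<noteq> P (s+2*k+i)) \<and>
     (\<exists>i<k. P (s+k+i) \<noteq> P (s+2*k+i)))"
  by (simp add: antipower_free_iff_antipower_at antipower_at_def cong: conj_cong)

lemma antipower_free_word_ofE:
  assumes "antipower_free (word_of N P)" "s + 3*k \<le> N"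
    "i1 < k" "P (s+i1) \<noteq> P (s+k+i1)" "i2 < k" "P (s+i2) \<noteq> P (s+2*k+i2)"
    "i3 < k" "P (s+k+i3) \<noteq> P (s+2*k+i3)"
  shows False
  using assms unfolding antipower_free_word_of_iff by blast

text \<open>In word form the shapes are 0^m, 0101..., 0^(m-2)11, 110^(m-2), 0^(m-3)101, 1010^(m-3) and
  0^a10^(m-1-a); if 3 does not divide m also 10^(m-2)1; and if m mod 3 = 2 also 010^(m-3)1,
  10^(m-3)10, 10^(m-3)11 and 110^(m-3)1.\<close>

definition free_shape :: "nat \<Rightarrow> (nat \<Rightarrow> bool) \<Rightarrow> bool" where
  "free_shape m P \<longleftrightarrow> P = (\<lambda>i. False) \<or> P = odd \<or> P = (\<lambda>i. m-2 \<le> i) \<or> P = (\<lambda>i. i < 2)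
     \<or> P = (\<lambda>i. i = m-3 \<or> i = m-1) \<or> P = (\<lambda>i. i = 0 \<or> i = 2) \<or> (\<exists>a<m. P = (\<lambda>i. i = a))
     \<or> (m mod 3 \<noteq> 0 \<and> P = (\<lambda>i. i = 0 \<or> i = m-1))
     \<or> (m mod 3 = 2 \<and> (P = (\<lambda>i. i = 1 \<or> i = m-1) \<or> P = (\<lambda>i. i = 0 \<or> i = m-2)
          \<or> P = (\<lambda>i. i = 0 \<or> m-2 \<le> i) \<or> P = (\<lambda>i. i \<le> 1 \<or> i = m-1)))"

lemma free_shapeI:
  "free_shape m (\<lambda>i. False)" "free_shape m odd" "free_shape m (\<lambda>i. m-2 \<le> i)"
  "free_shape m (\<lambda>i. i < 2)" "free_shape m (\<lambda>i. i = m-3 \<or> i = m-1)"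
  "free_shape m (\<lambda>i. i = 0 \<or> i = 2)" "a < m \<Longrightarrow> free_shape m (\<lambda>i. i = a)"
  "m mod 3 \<noteq> 0 \<Longrightarrow> free_shape m (\<lambda>i. i = 0 \<or> i = m-1)"
  "m mod 3 = 2 \<Longrightarrow> free_shape m (\<lambda>i. i = 1 \<or> i = m-1)"
  "m mod 3 = 2 \<Longrightarrow> free_shape m (\<lambda>i. i = 0 \<or> i = m-2)"
  "m mod 3 = 2 \<Longrightarrow> free_shape m (\<lambda>i. i = 0 \<or> m-2 \<le> i)"
  "m mod 3 = 2 \<Longrightarrow> free_shape m (\<lambda>i. i \<le> 1 \<or> i = m-1)"
  unfolding free_shape_def by blast+

definition shape_words :: "nat \<Rightarrow> word set" where
  "shape_words m = {word_of m P | P. free_shape m P}"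

lemma snoc_in_shape_wordsI:
  assumes "free_shape (Suc m) Q" "\<And>i. i < m \<Longrightarrow> P i = Q i" "c = Q m"
  shows "word_of m P @ [c] \<in> shape_words (Suc m)"
proof -
  have "word_of m P @ [c] = word_of (Suc m) Q"
    unfolding word_of_snoc using assms(2,3) by (intro word_of_cong) (auto simp: less_Suc_eq)
  then show ?thesis using assms(1) unfolding shape_words_def by blast
qed

lemma mod3_cases:
  obtains (z) k where "(x::nat) = 3*k" | (o) k where "x = 3*k+1" | (t) k where "x = 3*k+2"
proof -
  have "\<exists>k. x = 3*k \<or> x = 3*k+1 \<or> x = 3*k+2" by presburger
  then show ?thesis using that by blast
qed

lemma extend_zeros: "word_of m (\<lambda>i. False) @ [c] \<in> shape_words (Suc m)"
proof (cases c)
  case True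
  show ?thesis by (rule snoc_in_shape_wordsI[where Q = "\<lambda>i. i = m"], rule free_shapeI) (auto simp: True)
next
  case False
  show ?thesis by (rule snoc_in_shape_wordsI[where Q = "\<lambda>i. False"], rule free_shapeI) (auto simp: False)
qed

lemma extend_alternating:
  assumes "12 \<le> m" and free: "antipower_free (word_of m odd @ [c])"
  shows "word_of m odd @ [c] \<in> shape_words (Suc m)"
proof (cases "c = odd m")
  case True
  show ?thesis by (rule snoc_in_shape_wordsI[where Q = odd], rule free_shapeI) (auto simp: True)
next
  case False
  show ?thesis
    by (rule antipower_free_word_ofE[OF free[unfolded word_of_snoc], of "m-8" 3 0 2 0, THEN FalseE])
      (use assms(1) False in \<open>simp_all, ((presburger | arith)+)?\<close>)
qed

lemma two_ones_not_antipower_free: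
  assumes "2 \<le> a" "4 \<le> b" "b \<noteq> 5"
  shows "\<not> antipower_free (word_of (a+b+2) (\<lambda>i. i = a \<or> i = a+b+1))"
proof
  assume free: "antipower_free (word_of (a+b+2) (\<lambda>i. i = a \<or> i = a+b+1))"
  obtain a' where a': "a = a' + 2" using assms(1) by (metis le_add_diff_inverse2)
  \<comment> \<open>The window is chosen so that the two ones lie in the outer blocks at different offsets.\<close>
  show False
  proof (cases b rule: mod3_cases)
    case (o j)
    show False by (rule antipower_free_word_ofE[OF free, of "a'+2" "j+1" 0 0 j])
      (use assms o a' in \<open>simp_all, ((presburger | arith)+)?\<close>)
  next
    case (z j)
    show False by (rule antipower_free_word_ofE[OF free, of "a'+1" "j+1" 1 1 j])
      (use assms z a' in \<open>simp_all, ((presburger | arith)+)?\<close>)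
  next
    case (t j)
    show False by (rule antipower_free_word_ofE[OF free, of "a'" "j+2" 2 2 "j+1"])
      (use assms t a' in \<open>simp_all, ((presburger | arith)+)?\<close>)
  qed
qed

lemma single_one_snoc_one_not_antipower_free:
  assumes "12 \<le> m" "a + 2 < m" "Suc m mod 3 = 0 \<or> a \<noteq> 0" "Suc m mod 3 \<noteq> 2 \<or> a \<noteq> 1"
  shows "\<not> antipower_free (word_of m (\<lambda>i. i = a) @ [True])"
proof
  assume "antipower_free (word_of m (\<lambda>i. i = a) @ [True])"
  note free = this[unfolded word_of_snoc]
  consider "a = m-3" | "a = m-4" | "a = m-6" | "a = 0" | "a = 1" | "2 \<le> a" "a + 5 \<le> m" "a \<noteq> m-6"
  proof -
    have "a = m-3 \<or> a = m-4 \<or> a = m-6 \<or> a = 0 \<or> a = 1 \<or> (2 \<le> a \<and> a + 5 \<le> m \<and> a \<noteq> m-6)"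
      using assms(1,2) by presburger
    then show thesis using that by blast
  qed
  then show False
  proof cases
    case 1
    show False by (rule antipower_free_word_ofE[OF free, of "m-5" 2 0 1 0]) (use 1 assms(1) in \<open>simp_all, ((presburger | arith)+)?\<close>)
  next
    case 2
    show False by (rule antipower_free_word_ofE[OF free, of "m-8" 3 1 2 1]) (use 2 assms(1) in \<open>simp_all, ((presburger | arith)+)?\<close>)
  next
    case 3
    show False by (rule antipower_free_word_ofE[OF free, of "m-11" 4 1 3 1]) (use 3 assms(1) in \<open>simp_all, ((presburger | arith)+)?\<close>)
  next
    case 4
    with assms(3) have "Suc m mod 3 = 0" by simp
    then obtain k where k: "Suc m = 3*k" by auto
    show False by (rule antipower_free_word_ofE[OF free, of 0 k 0 0 "k-1"]) (use 4 k assms(1) in \<open>simp_all, ((presburger | arith)+)?\<close>)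
  next
    case 5
    show False
    proof (cases "Suc m" rule: mod3_cases)
      case (z k)
      show False by (rule antipower_free_word_ofE[OF free, of 0 k 1 1 "k-1"]) (use 5 z assms(1) in \<open>simp_all, ((presburger | arith)+)?\<close>)
    next
      case (o k)
      show False by (rule antipower_free_word_ofE[OF free, of 1 k 0 0 "k-1"]) (use 5 o assms(1) in \<open>simp_all, ((presburger | arith)+)?\<close>)
    next
      case (t k)
      with 5 assms(4) show False by presburger
    qed
  next
    case 6
    define b where "b = m - 1 - a"
    have m: "m = a + b + 1" and len: "Suc m = a + b + 2" using 6 by (simp_all add: b_def)
    have "word_of (Suc m) (\<lambda>i. if i < m then i = a else True) = word_of (a+b+2) (\<lambda>i. i = a \<or> i = a+b+1)"
      unfolding len by (rule word_of_cong) (auto simp: m)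
    moreover have "4 \<le> b" "b \<noteq> 5" using 6 unfolding b_def by linarith+
    ultimately have "\<not> antipower_free (word_of (Suc m) (\<lambda>i. if i < m then i = a else True))"
      using two_ones_not_antipower_free[of a b] 6(1) by simp
    with free show False by contradiction
  qed
qed

lemma extend_single_one:
  assumes "12 \<le> m" "a < m" and free: "antipower_free (word_of m (\<lambda>i. i = a) @ [c])"
  shows "word_of m (\<lambda>i. i = a) @ [c] \<in> shape_words (Suc m)"
proof (cases c)
  case False
  show ?thesis by (rule snoc_in_shape_wordsI[where Q = "\<lambda>i. i = a"], rule free_shapeI)
    (use assms(2) in \<open>auto simp: False\<close>)
next
  case c: True
  consider "a = m-1" | "a = m-2" | "a = 0" "Suc m mod 3 \<noteq> 0" | "a = 1" "Suc m mod 3 = 2"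
    | "a + 2 < m" "Suc m mod 3 = 0 \<or> a \<noteq> 0" "Suc m mod 3 \<noteq> 2 \<or> a \<noteq> 1"
  proof -
    have "a = m-1 \<or> a = m-2 \<or> a + 2 < m" using assms(2) by linarith
    then show thesis using that by fastforce
  qed
  then show ?thesis
  proof cases
    case 1
    show ?thesis by (rule snoc_in_shape_wordsI[where Q = "\<lambda>i. Suc m - 2 \<le> i"], rule free_shapeI)
      (use 1 assms(1) in \<open>auto simp: c\<close>)
  next
    case 2
    show ?thesis by (rule snoc_in_shape_wordsI[where Q = "\<lambda>i. i = Suc m - 3 \<or> i = Suc m - 1"], rule free_shapeI)
      (use 2 assms(1) in \<open>auto simp: c\<close>)
  next
    case 3
    show ?thesis by (rule snoc_in_shape_wordsI[where Q = "\<lambda>i. i = 0 \<or> i = Suc m - 1"], rule free_shapeI)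
      (use 3 in \<open>auto simp: c\<close>)
  next
    case 4
    show ?thesis by (rule snoc_in_shape_wordsI[where Q = "\<lambda>i. i = 1 \<or> i = Suc m - 1"], rule free_shapeI)
      (use 4 assms(1) in \<open>auto simp: c\<close>)
  next
    case 5
    with free c show ?thesis using single_one_snoc_one_not_antipower_free[OF assms(1)] by simp
  qed
qed

lemma ending_011_snoc_not_antipower_free:
  assumes "12 \<le> m"
  shows "\<not> antipower_free (word_of m (\<lambda>i. m-2 \<le> i) @ [c])"
proof
  assume free: "antipower_free (word_of m (\<lambda>i. m-2 \<le> i) @ [c])"
  show False by (rule antipower_free_word_ofE[OF free[unfolded word_of_snoc], of "m-5" 2 1 0 0])
    (use assms in \<open>simp_all, ((presburger | arith)+)?\<close>)
qed

lemma ending_101_snoc_not_antipower_free: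
  assumes "12 \<le> m"
  shows "\<not> antipower_free (word_of m (\<lambda>i. i = m-3 \<or> i = m-1) @ [c])"
proof
  assume "antipower_free (word_of m (\<lambda>i. i = m-3 \<or> i = m-1) @ [c])"
  note free = this[unfolded word_of_snoc]
  show False
  proof (cases c)
    case False
    show False by (rule antipower_free_word_ofE[OF free, of "m-8" 3 2 1 1])
      (use assms False in \<open>simp_all, ((presburger | arith)+)?\<close>)
  next
    case True
    show False by (rule antipower_free_word_ofE[OF free, of "m-5" 2 0 0 1])
      (use assms True in \<open>simp_all, ((presburger | arith)+)?\<close>)
  qed
qed

lemma extend_starting_110:
  assumes "12 \<le> m" and free: "antipower_free (word_of m (\<lambda>i. i < 2) @ [c])"
  shows "word_of m (\<lambda>i. i < 2) @ [c] \<in> shape_words (Suc m)"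
proof (cases c)
  case False
  show ?thesis by (rule snoc_in_shape_wordsI[where Q = "\<lambda>i. i < 2"], rule free_shapeI)
    (use assms(1) in \<open>auto simp: False\<close>)
next
  case c: True
  note free' = free[unfolded word_of_snoc]
  show ?thesis
  proof (cases "Suc m" rule: mod3_cases)
    case (t k)
    show ?thesis by (rule snoc_in_shape_wordsI[where Q = "\<lambda>i. i \<le> 1 \<or> i = Suc m - 1"], rule free_shapeI)
      (use t assms(1) in \<open>auto simp: c, presburger\<close>)
  next
    case (z k)
    show ?thesis by (rule antipower_free_word_ofE[OF free', of 0 k 0 0 "k-1", THEN FalseE])
      (use z assms(1) c in \<open>simp_all, ((presburger | arith)+)?\<close>)
  next
    case (o k)
    show ?thesis by (rule antipower_free_word_ofE[OF free', of 1 k 0 0 "k-1", THEN FalseE])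
      (use o assms(1) c in \<open>simp_all, ((presburger | arith)+)?\<close>)
  qed
qed

lemma extend_starting_101:
  assumes "12 \<le> m" and free: "antipower_free (word_of m (\<lambda>i. i = 0 \<or> i = 2) @ [c])"
  shows "word_of m (\<lambda>i. i = 0 \<or> i = 2) @ [c] \<in> shape_words (Suc m)"
proof (cases c)
  case False
  show ?thesis by (rule snoc_in_shape_wordsI[where Q = "\<lambda>i. i = 0 \<or> i = 2"], rule free_shapeI)
    (use assms(1) in \<open>auto simp: False\<close>)
next
  case c: True
  note free' = free[unfolded word_of_snoc]
  show ?thesis
  proof (cases "Suc m" rule: mod3_cases)
    case (z k)
    show ?thesis by (rule antipower_free_word_ofE[OF free', of 0 k 0 0 "k-1", THEN FalseE])
      (use z assms(1) c in \<open>simp_all, ((presburger | arith)+)?\<close>)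
  next
    case (o k)
    show ?thesis by (rule antipower_free_word_ofE[OF free', of 1 k 1 1 "k-1", THEN FalseE])
      (use o assms(1) c in \<open>simp_all, ((presburger | arith)+)?\<close>)
  next
    case (t k)
    show ?thesis by (rule antipower_free_word_ofE[OF free', of 2 k 0 0 "k-1", THEN FalseE])
      (use t assms(1) c in \<open>simp_all, ((presburger | arith)+)?\<close>)
  qed
qed

lemma extend_starting_1_ending_1:
  assumes "12 \<le> m" "m mod 3 \<noteq> 0"
    and free: "antipower_free (word_of m (\<lambda>i. i = 0 \<or> i = m-1) @ [c])"
  shows "word_of m (\<lambda>i. i = 0 \<or> i = m-1) @ [c] \<in> shape_words (Suc m)"
proof (cases "Suc m" rule: mod3_cases)
  case (z k)
  show ?thesis by (rule antipower_free_word_ofE[OF free[unfolded word_of_snoc], of 0 k 0 0 "k-2", THEN FalseE])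
    (use z assms(1) in \<open>simp_all, ((presburger | arith)+)?\<close>)
next
  case (o k)
  with assms(2) show ?thesis by presburger
next
  case (t k)
  show ?thesis
  proof (cases c)
    case False
    show ?thesis by (rule snoc_in_shape_wordsI[where Q = "\<lambda>i. i = 0 \<or> i = Suc m - 2"], rule free_shapeI)
      (use t assms(1) in \<open>auto simp: False, presburger\<close>)
  next
    case True
    show ?thesis by (rule snoc_in_shape_wordsI[where Q = "\<lambda>i. i = 0 \<or> Suc m - 2 \<le> i"], rule free_shapeI)
      (use t assms(1) in \<open>auto simp: True, presburger\<close>)
  qed
qed

lemma mod3_2_shapes_snoc_not_antipower_free:
  assumes "12 \<le> m" "m mod 3 = 2"
    and P: "P \<in> {\<lambda>i. i = 1 \<or> i = m-1, \<lambda>i. i = 0 \<or> i = m-2,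
                  \<lambda>i. i = 0 \<or> m-2 \<le> i, \<lambda>i. i \<le> 1 \<or> i = m-1}"
  shows "\<not> antipower_free (word_of m P @ [c])"
proof
  assume "antipower_free (word_of m P @ [c])"
  note free = this[unfolded word_of_snoc]
  have "3 dvd Suc m" using assms(2) by presburger
  then obtain k where k: "Suc m = 3*k" by (elim dvdE)
  from P show False
  proof (elim insertE emptyE)
    assume P_eq: "P = (\<lambda>i. i = 1 \<or> i = m-1)"
    show False by (rule antipower_free_word_ofE[OF free[unfolded P_eq], of 0 k 1 1 "k-2"])
      (use k assms(1) in \<open>simp_all, ((presburger | arith)+)?\<close>)
  next
    assume P_eq: "P = (\<lambda>i. i = 0 \<or> i = m-2)"
    show False by (rule antipower_free_word_ofE[OF free[unfolded P_eq], of 0 k 0 0 "k-3"])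
      (use k assms(1) in \<open>simp_all, ((presburger | arith)+)?\<close>)
  next
    assume P_eq: "P = (\<lambda>i. i = 0 \<or> m-2 \<le> i)"
    show False by (rule antipower_free_word_ofE[OF free[unfolded P_eq], of 0 k 0 0 "k-3"])
      (use k assms(1) in \<open>simp_all, ((presburger | arith)+)?\<close>)
  next
    assume P_eq: "P = (\<lambda>i. i \<le> 1 \<or> i = m-1)"
    show False by (rule antipower_free_word_ofE[OF free[unfolded P_eq], of 0 k 0 0 "k-2"])
      (use k assms(1) in \<open>simp_all, ((presburger | arith)+)?\<close>)
  qed
qed

lemma extend_shape:
  assumes "12 \<le> m" "free_shape m P" and free: "antipower_free (word_of m P @ [c])"
  shows "word_of m P @ [c] \<in> shape_words (Suc m)"
  using assms(2) unfolding free_shape_def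
proof (elim disjE exE conjE)
  assume P: "P = (\<lambda>i. False)"
  show ?thesis unfolding P by (rule extend_zeros)
next
  assume P: "P = odd"
  show ?thesis using free unfolding P by (rule extend_alternating[OF assms(1)])
next
  assume P: "P = (\<lambda>i. m-2 \<le> i)"
  show ?thesis using free ending_011_snoc_not_antipower_free[OF assms(1)] unfolding P by blast
next
  assume P: "P = (\<lambda>i. i < 2)"
  show ?thesis using free unfolding P by (rule extend_starting_110[OF assms(1)])
next
  assume P: "P = (\<lambda>i. i = m-3 \<or> i = m-1)"
  show ?thesis using free ending_101_snoc_not_antipower_free[OF assms(1)] unfolding P by blast
next
  assume P: "P = (\<lambda>i. i = 0 \<or> i = 2)"
  show ?thesis using free unfolding P by (rule extend_starting_101[OF assms(1)])
next
  fix a assume "a < m" and P: "P = (\<lambda>i. i = a)"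
  show ?thesis using free unfolding P by (rule extend_single_one[OF assms(1) \<open>a < m\<close>])
next
  assume "m mod 3 \<noteq> 0" and P: "P = (\<lambda>i. i = 0 \<or> i = m-1)"
  show ?thesis using free unfolding P by (rule extend_starting_1_ending_1[OF assms(1) \<open>m mod 3 \<noteq> 0\<close>])
qed (use free mod3_2_shapes_snoc_not_antipower_free[OF assms(1)] in blast)+

section \<open>The base case by enumeration\<close>

lemma antipower_at_code [code]:
  "antipower_at w s k \<longleftrightarrow> s + 3*k \<le> length w \<and>
     list_ex (\<lambda>i. w!(s+i) \<noteq> w!(s+k+i)) [0..<k] \<and> list_ex (\<lambda>i. w!(s+i) \<noteq> w!(s+2*k+i)) [0..<k] \<and>
     list_ex (\<lambda>i. w!(s+k+i) \<noteq> w!(s+2*k+i)) [0..<k]"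
  unfolding antipower_at_def list_ex_iff by auto

definition has_antipower :: "word \<Rightarrow> bool" where
  "has_antipower w \<longleftrightarrow>
     list_ex (\<lambda>k. list_ex (\<lambda>s. antipower_at w s k) [0..<length w - 3*k + 1]) [1..<length w div 3 + 1]"

lemma has_antipower_iff: "has_antipower w \<longleftrightarrow> \<not> antipower_free w"
proof -
  have "has_antipower w \<longleftrightarrow> (\<exists>s k. antipower_at w s k)"
  proof
    assume "has_antipower w"
    then show "\<exists>s k. antipower_at w s k" unfolding has_antipower_def list_ex_iff by blast
  next
    assume "\<exists>s k. antipower_at w s k"
    then obtain s k where a: "antipower_at w s k" by blast
    then have "k \<in> set [1..<length w div 3 + 1]" "s \<in> set [0..<length w - 3*k + 1]"
      unfolding antipower_at_def by auto
    with a show "has_antipower w" unfolding has_antipower_def list_ex_iff by blast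
  qed
  then show ?thesis by (simp add: antipower_free_iff_antipower_at)
qed

fun antipower_free_words :: "nat \<Rightarrow> word list" where
  "antipower_free_words 0 = [[]]"
| "antipower_free_words (Suc m) =
     [w \<leftarrow> concat (map (\<lambda>x. [x @ [False], x @ [True]]) (antipower_free_words m)). \<not> has_antipower w]"

lemma set_antipower_free_words: "set (antipower_free_words m) = {w. length w = m \<and> antipower_free w}"
proof (induction m)
  case 0
  show ?case by (auto simp: antipower_free_iff_antipower_at antipower_at_def)
next
  case (Suc m)
  show ?case
  proof (intro set_eqI iffI)
    fix w assume "w \<in> set (antipower_free_words (Suc m))"
    then show "w \<in> {w. length w = Suc m \<and> antipower_free w}"
      using Suc.IH has_antipower_iff by auto
  next
    fix w assume "w \<in> {w. length w = Suc m \<and> antipower_free w}"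
    then have len: "length w = Suc m" and free: "antipower_free w" by auto
    then have w: "w = butlast w @ [last w]" by (metis append_butlast_last_id length_0_conv nat.distinct(1))
    have "butlast w \<in> set (antipower_free_words m)"
      using Suc.IH len free antipower_free_appendD[of "butlast w" "[last w]"] w by simp
    then show "w \<in> set (antipower_free_words (Suc m))"
      using free has_antipower_iff w by (cases "last w") (auto intro!: bexI[of _ "butlast w"])
  qed
qed

definition base_shape_words :: "nat \<Rightarrow> word list" where
  "base_shape_words m = map (word_of m)
     ([\<lambda>i. False, odd, \<lambda>i. m-2 \<le> i, \<lambda>i. i < 2, \<lambda>i. i = m-3 \<or> i = m-1, \<lambda>i. i = 0 \<or> i = 2]
      @ map (\<lambda>a i. i = a) [0..<m])"

lemma set_base_shape_words: "set (base_shape_words m) \<subseteq> shape_words m"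
  using free_shapeI[where m = m] by (auto simp: base_shape_words_def shape_words_def)

text \<open>Since 3 divides 12, only the shapes that exist for every length occur.\<close>

lemma antipower_free_words_12_are_shapes:
  "list_all (\<lambda>w. w \<in> set (base_shape_words 12) \<or> map Not w \<in> set (base_shape_words 12))
     (antipower_free_words 12)"
  by code_simp

theorem antipower_free_classification:
  assumes "12 \<le> m" "length w = m" "antipower_free w"
  shows "w \<in> shape_words m \<union> map Not ` shape_words m"
  using assms
proof (induction m arbitrary: w rule: dec_induct)
  case base
  then have "w \<in> set (antipower_free_words 12)" by (simp add: set_antipower_free_words)
  then have "w \<in> set (base_shape_words 12) \<or> map Not w \<in> set (base_shape_words 12)"
    using antipower_free_words_12_are_shapes by (simp add: list_all_iff)
  then show ?case
  proof
    assume "w \<in> set (base_shape_words 12)"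
    then show ?case using set_base_shape_words by blast
  next
    assume "map Not w \<in> set (base_shape_words 12)"
    then have "map Not (map Not w) \<in> map Not ` shape_words 12" using set_base_shape_words by blast
    then show ?case by simp
  qed
next
  case (step m w)
  obtain x c where w: "w = x @ [c]"
    using step.prems(1) by (metis append_butlast_last_id length_0_conv nat.distinct(1))
  then have "length x = m" "antipower_free x"
    using step.prems antipower_free_appendD by auto
  then obtain P where P: "free_shape m P" and "x = word_of m P \<or> x = map Not (word_of m P)"
    using step.IH unfolding shape_words_def by blast
  then consider "w = word_of m P @ [c]" | "w = map Not (word_of m P @ [\<not> c])"
    using w by auto
  then show ?case
  proof cases
    case 1
    then show ?thesis using extend_shape[OF step.hyps(1) P] step.prems(2) by simp
  next
    case 2
    then have "antipower_free (word_of m P @ [\<not> c])"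
      using step.prems(2) antipower_free_map_Not_iff by metis
    then have "word_of m P @ [\<not> c] \<in> shape_words (Suc m)" by (rule extend_shape[OF step.hyps(1) P])
    then show ?thesis using 2 by blast
  qed
qed

section \<open>The language \<open>L4\<close>\<close>

lemma rev_word_of: "rev (word_of m P) = word_of m (\<lambda>i. P (m - Suc i))"
  by (rule nth_equalityI) (auto simp: rev_nth)

lemma alternating_eq_word_of: "concat (replicate j [False, True]) = word_of (2*j) odd"
  by (induction j) (simp_all add: word_of_def flip: replicate_append_same)

lemma alternating_snoc_eq_word_of: "concat (replicate j [False, True]) @ [False] = word_of (Suc (2*j)) odd"
  by (simp add: alternating_eq_word_of word_of_def)

lemma L4_eq: "L4 = range (\<lambda>k. word_of k (\<lambda>i. False)) \<union> range (\<lambda>k. word_of k odd)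
    \<union> {word_of (Suc (a+b)) (\<lambda>i. i = a) | a b. True}
    \<union> range (\<lambda>a. word_of (a+3) (\<lambda>i. a < i)) \<union> range (\<lambda>a. word_of (a+3) (\<lambda>i. i = a \<or> i = a+2))"
proof -
  have zeros: "replicate k False = word_of k (\<lambda>i. False)" for k
    by (simp add: word_of_def map_replicate_const)
  have single: "replicate a False @ True # replicate b False = word_of (Suc (a+b)) (\<lambda>i. i = a)" for a b
    by (rule nth_equalityI) (auto simp: nth_append nth_Cons')
  have ending_011: "replicate a False @ [False, True, True] = word_of (a+3) (\<lambda>i. a < i)" for a
    by (rule nth_equalityI) (auto simp: nth_append nth_Cons')
  have ending_101: "replicate a False @ [True, False, True] = word_of (a+3) (\<lambda>i. i = a \<or> i = a+2)" for a
    by (rule nth_equalityI) (auto simp: nth_append nth_Cons')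
  have "star_of [b0, b1] = range (\<lambda>j. word_of (2*j) odd)"
    unfolding star_of_def by (auto simp: alternating_eq_word_of)
  moreover have "star_of [b0, b1] \<cdot> {[b0]} = range (\<lambda>j. word_of (Suc (2*j)) odd)"
    unfolding star_of_def lconc_def by (auto simp flip: alternating_snoc_eq_word_of)
  moreover have "range (\<lambda>j. word_of (2*j) odd) \<union> range (\<lambda>j. word_of (Suc (2*j)) odd) = range (\<lambda>k. word_of k odd)"
  proof -
    have "word_of k odd \<in> range (\<lambda>j. word_of (2*j) odd) \<union> range (\<lambda>j. word_of (Suc (2*j)) odd)" for k
      by (cases "even k") (auto elim!: evenE oddE)
    then show ?thesis by blast
  qed
  ultimately have alternating: "star_of [b0, b1] \<union> (star_of [b0, b1] \<cdot> {[b0]}) = range (\<lambda>k. word_of k odd)"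
    by simp
  have "star_of [b0] = range (\<lambda>k. word_of k (\<lambda>i. False))"
    unfolding star_of_def by (auto simp: zeros)
  moreover have "star_of [b0] \<cdot> {[b1]} \<cdot> star_of [b0] = {word_of (Suc (a+b)) (\<lambda>i. i = a) | a b. True}"
  proof -
    have "star_of [b0] \<cdot> {[b1]} \<cdot> star_of [b0] = {replicate a False @ True # replicate b False | a b. True}"
      unfolding star_of_def lconc_def by auto
    then show ?thesis by (simp only: single)
  qed
  moreover have zeros_then: "star_of [b0] \<cdot> {v} = range (\<lambda>a. replicate a False @ v)" for v
    unfolding star_of_def lconc_def by auto
  ultimately show ?thesis
    unfolding L4_def by (simp add: alternating zeros_then ending_011 ending_101 Un_assoc)
qed

lemma antipower_free_L4: "v \<in> L4 \<Longrightarrow> antipower_free v"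
  unfolding L4_eq by (auto simp: antipower_free_word_of_iff)

lemma shape_words_subset_L4:
  assumes "n mod 3 = 0" "3 \<le> n"
  shows "shape_words n \<subseteq> L4 \<union> rev ` L4"
proof
  fix w assume "w \<in> shape_words n"
  then obtain P where w: "w = word_of n P" and P: "free_shape n P" unfolding shape_words_def by blast
  obtain a where n: "n = a + 3" using assms(2) by (metis add.commute le_Suc_ex)
  have ending_011: "word_of n (\<lambda>i. n-2 \<le> i) = word_of (a+3) (\<lambda>i. a < i)"
    and ending_101: "word_of n (\<lambda>i. i = n-3 \<or> i = n-1) = word_of (a+3) (\<lambda>i. i = a \<or> i = a+2)"
    and starting_110: "word_of n (\<lambda>i. i < 2) = rev (word_of (a+3) (\<lambda>i. a < i))"
    and starting_101: "word_of n (\<lambda>i. i = 0 \<or> i = 2) = rev (word_of (a+3) (\<lambda>i. i = a \<or> i = a+2))"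
    unfolding rev_word_of n by (auto intro: word_of_cong)
  have single: "word_of n (\<lambda>i. i = b) = word_of (Suc (b + (n - Suc b))) (\<lambda>i. i = b)" if "b < n" for b
    using that by simp
  from P show "w \<in> L4 \<union> rev ` L4"
    unfolding free_shape_def
  proof (elim disjE exE conjE)
    assume P_eq: "P = (\<lambda>i. False)"
    show ?thesis unfolding w P_eq L4_eq by blast
  next
    assume P_eq: "P = odd"
    show ?thesis unfolding w P_eq L4_eq by blast
  next
    assume P_eq: "P = (\<lambda>i. n-2 \<le> i)"
    show ?thesis unfolding w P_eq ending_011 L4_eq by blast
  next
    assume P_eq: "P = (\<lambda>i. i < 2)"
    show ?thesis unfolding w P_eq starting_110 L4_eq by blast
  next
    assume P_eq: "P = (\<lambda>i. i = n-3 \<or> i = n-1)"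
    show ?thesis unfolding w P_eq ending_101 L4_eq by blast
  next
    assume P_eq: "P = (\<lambda>i. i = 0 \<or> i = 2)"
    show ?thesis unfolding w P_eq starting_101 L4_eq by blast
  next
    fix b assume "b < n" and P_eq: "P = (\<lambda>i. i = b)"
    show ?thesis unfolding w P_eq single[OF \<open>b < n\<close>] L4_eq by blast
  qed (use assms(1) in simp_all)
qed

lemma closure_n_iff:
  "w \<in> closure_n n L \<longleftrightarrow>
     length w = n \<and> (w \<in> L \<or> map Not w \<in> L \<or> rev w \<in> L \<or> rev (map Not w) \<in> L)"
proof -
  have image_involution: "w \<in> f ` A \<longleftrightarrow> f w \<in> A"
    if "\<And>x. f (f x) = x" for f :: "word \<Rightarrow> word" and A
  proof
    assume "w \<in> f ` A"
    then show "f w \<in> A" using that by auto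
  next
    assume "f w \<in> A"
    then show "w \<in> f ` A" using image_eqI[of w f "f w"] that by simp
  qed
  have "w \<in> complement ` A \<longleftrightarrow> complement w \<in> A"
    and "w \<in> rev ` A \<longleftrightarrow> rev w \<in> A"
    and "w \<in> (complement \<circ> rev) ` A \<longleftrightarrow> (complement \<circ> rev) w \<in> A" for A
    by (rule image_involution, simp add: complement_def rev_map comp_def)+
  then show ?thesis
    unfolding closure_n_def Let_def by (auto simp: complement_def rev_map)
qed

theorem theorem4:
  fixes n :: nat
  assumes "n \<ge> 18" and "3 dvd n"
  shows "A n = closure_n n L4"
proof (intro set_eqI iffI)
  fix w assume "w \<in> A n"
  then have len: "length w = n" and free: "antipower_free w" by (auto simp: A_eq_antipower_free)
  have "w \<in> shape_words n \<union> map Not ` shape_words n"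
    using antipower_free_classification assms(1) len free by simp
  moreover have "shape_words n \<subseteq> L4 \<union> rev ` L4"
    using shape_words_subset_L4 assms by auto
  ultimately show "w \<in> closure_n n L4"
    unfolding closure_n_iff using len by (auto simp: rev_map)
next
  fix w assume "w \<in> closure_n n L4"
  then show "w \<in> A n"
    unfolding closure_n_iff A_eq_antipower_free
    by (auto dest: antipower_free_L4)
qed

end
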